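(* Let $(A,\mu_A,\alpha_A)$ and $(B,\mu_B,\alpha_B)$ be Hom-associative algebras and $R:B\otimes A\to A\otimes B$ a Hom-twisting map, written $R(b\otimes a)=a_R\otimes b_R$. Define $T:(A\otimes B)\otimes(A\otimes B)\to(A\otimes B)\otimes(A\otimes B)$ by $T((a\otimes b)\otimes(a'\otimes b'))=(a\otimes b_R)\otimes(a'_R\otimes b')$. Then $T$ is a Hom-twistor for the tensor product Hom-associative algebra $(A\otimes B,\mu_{A\otimes B},\alpha_A\otimes\alpha_B)$. Consequently $A\otimes_R B:=(A\otimes B)^T$, with multiplication $(a\otimes b)(a'\otimes b')=aa'_R\otimes b_Rb'$ and structure map $\alpha_A\otimes\alpha_B$, is a Hom-associative algebra.
   Context: Algebras over a field $k$, not assumed unital. A Hom-associative algebra is $(A,\mu,\alpha)$ with $\mu(a\otimes a')=aa'$, $\alpha(aa')=\alpha(a)\alpha(a')$, $\alpha(a)(a'a'')=(aa')\alpha(a'')$. The tensor product of Hom-associative algebras $A,B$ is $A\otimes B$ with $(a\otimes b)(a'\otimes b')=aa'\otimes bb'$ and structure map $\alpha_A\otimes\alpha_B$. A Hom-twisting map between $A$ and $B$ is a linear $R:B\otimes A\to A\otimes B$ with $(\alpha_A\otimes\alpha_B)\circ R=R\circ(\alpha_B\otimes\alpha_A)$, $R\circ(\alpha_B\otimes\mu_A)=(\mu_A\otimes\alpha_B)\circ(\mathrm{id}_A\otimes R)\circ(R\otimes\mathrm{id}_A)$, $R\circ(\mu_B\otimes\alpha_A)=(\alpha_A\otimes\mu_B)\circ(R\otimes\mathrm{id}_B)\circ(\mathrm{id}_B\otimes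 R)$. For a Hom-associative algebra $(D,\mu,\alpha)$ and linear $T:D\otimes D\to D\otimes D$ written $T(d\otimes d')=d^T\otimes d'_T$, let $T_{12}=T\otimes\mathrm{id}$, $T_{23}=\mathrm{id}\otimes T$, $T_{13}(d\otimes d'\otimes d'')=d^T\otimes d'\otimes d''_T$; $T$ is a Hom-twistor if $(\alpha\otimes\alpha)\circ T=T\circ(\alpha\otimes\alpha)$, $T\circ(\alpha\otimes\mu)=(\alpha\otimes\mu)\circ T_{13}\circ T_{12}$, $T\circ(\mu\otimes\alpha)=(\mu\otimes\alpha)\circ T_{13}\circ T_{23}$, $T_{12}\circ T_{23}=T_{23}\circ T_{12}$; and $D^T$ denotes $(D,\mu\circ T,\alpha)$. *)

theory Defs
  imports "HOL-Library.Poly_Mapping"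
begin

(* Vector spaces over a field 'k are modelled as free vector spaces: the space with
basis I (a subset of a type 'i) is the set of finitely supported functions
'i \<Rightarrow>0 'k whose support lies in I.  The tensor product of the spaces with
bases I and J is the space with basis I \<times> J, elementary tensors being
x \<otimes> y = (\<lambda>(i,j). x i * y j). *)

definition fvs :: "'i set \<Rightarrow> ('i \<Rightarrow>\<^sub>0 'k::field) set" where
  "fvs I = {x. Poly_Mapping.keys x \<subseteq> I}"

definition smult :: "'k::field \<Rightarrow> ('i \<Rightarrow>\<^sub>0 'k) \<Rightarrow> ('i \<Rightarrow>\<^sub>0 'k)" where
  "smult c x = Poly_Mapping.map (\<lambda>v. c * v) x"

definition is_lin :: "'i set \<Rightarrow> 'j set \<Rightarrow> (('i \<Rightarrow>\<^sub>0 'k::field) \<Rightarrow> ('j \<Rightarrow>\<^sub>0 'k)) \<Rightarrow> bool" where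
  "is_lin I J f \<longleftrightarrow> (\<forall>x\<in>fvs I. f x \<in> fvs J)
     \<and> (\<forall>x\<in>fvs I. \<forall>y\<in>fvs I. f (x + y) = f x + f y)
     \<and> (\<forall>c. \<forall>x\<in>fvs I. f (smult c x) = smult c (f x))"

definition tensor :: "('i \<Rightarrow>\<^sub>0 'k::field) \<Rightarrow> ('j \<Rightarrow>\<^sub>0 'k) \<Rightarrow> ('i \<times> 'j \<Rightarrow>\<^sub>0 'k)" where
  "tensor x y = Abs_poly_mapping (\<lambda>(i, j). Poly_Mapping.lookup x i * Poly_Mapping.lookup y j)"

definition lext :: "('i \<Rightarrow> ('j \<Rightarrow>\<^sub>0 'k::field)) \<Rightarrow> ('i \<Rightarrow>\<^sub>0 'k) \<Rightarrow> ('j \<Rightarrow>\<^sub>0 'k)" where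
  "lext g z = (\<Sum>i\<in>Poly_Mapping.keys z. smult (Poly_Mapping.lookup z i) (g i))"

definition tmap :: "(('i \<Rightarrow>\<^sub>0 'k::field) \<Rightarrow> ('i2 \<Rightarrow>\<^sub>0 'k)) \<Rightarrow> (('j \<Rightarrow>\<^sub>0 'k) \<Rightarrow> ('j2 \<Rightarrow>\<^sub>0 'k))
     \<Rightarrow> ('i \<times> 'j \<Rightarrow>\<^sub>0 'k) \<Rightarrow> ('i2 \<times> 'j2 \<Rightarrow>\<^sub>0 'k)" where
  "tmap f g = lext (\<lambda>(i, j). tensor (f (Poly_Mapping.single i 1)) (g (Poly_Mapping.single j 1)))"

definition assocl :: "('a \<times> ('b \<times> 'c) \<Rightarrow>\<^sub>0 'k::field) \<Rightarrow> (('a \<times> 'b) \<times> 'c \<Rightarrow>\<^sub>0 'k)" where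
  "assocl = lext (\<lambda>(a, (b, c)). Poly_Mapping.single ((a, b), c) 1)"

definition assocr :: "(('a \<times> 'b) \<times> 'c \<Rightarrow>\<^sub>0 'k::field) \<Rightarrow> ('a \<times> ('b \<times> 'c) \<Rightarrow>\<^sub>0 'k)" where
  "assocr = lext (\<lambda>((a, b), c). Poly_Mapping.single (a, (b, c)) 1)"

(* Hom-associative algebra (A, mu, alpha) with A the space with basis I,
mu : A \<otimes> A \<rightarrow> A linear, and a a' := mu (a \<otimes> a'). *)
definition hom_assoc :: "'i set \<Rightarrow> (('i \<times> 'i \<Rightarrow>\<^sub>0 'k::field) \<Rightarrow> ('i \<Rightarrow>\<^sub>0 'k))
    \<Rightarrow> (('i \<Rightarrow>\<^sub>0 'k) \<Rightarrow> ('i \<Rightarrow>\<^sub>0 'k)) \<Rightarrow> bool" where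
  "hom_assoc I mu alpha \<longleftrightarrow> is_lin (I \<times> I) I mu \<and> is_lin I I alpha
     \<and> (\<forall>a\<in>fvs I. \<forall>a'\<in>fvs I. alpha (mu (tensor a a')) = mu (tensor (alpha a) (alpha a')))
     \<and> (\<forall>a\<in>fvs I. \<forall>a'\<in>fvs I. \<forall>a''\<in>fvs I.
          mu (tensor (alpha a) (mu (tensor a' a''))) = mu (tensor (mu (tensor a a')) (alpha a'')))"

(* Multiplication of the tensor product algebra:
(mu_A \<otimes> mu_B) \<circ> (id \<otimes> flip \<otimes> id). *)
definition mid_swap :: "(('i \<times> 'j) \<times> ('i \<times> 'j) \<Rightarrow>\<^sub>0 'k::field) \<Rightarrow> (('i \<times> 'i) \<times> ('j \<times> 'j) \<Rightarrow>\<^sub>0 'k)" where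
  "mid_swap = lext (\<lambda>((i, j), (i', j')). Poly_Mapping.single ((i, i'), (j, j')) 1)"

definition tensor_mult ::
  "(('i \<times> 'i \<Rightarrow>\<^sub>0 'k::field) \<Rightarrow> ('i \<Rightarrow>\<^sub>0 'k)) \<Rightarrow> (('j \<times> 'j \<Rightarrow>\<^sub>0 'k) \<Rightarrow> ('j \<Rightarrow>\<^sub>0 'k))
    \<Rightarrow> (('i \<times> 'j) \<times> ('i \<times> 'j) \<Rightarrow>\<^sub>0 'k) \<Rightarrow> ('i \<times> 'j \<Rightarrow>\<^sub>0 'k)" where
  "tensor_mult muA muB = tmap muA muB \<circ> mid_swap"

(* Hom-twisting map R : B \<otimes> A \<rightarrow> A \<otimes> B (A with basis I, B with basis J).
Triple tensors are identified via the canonical associativity isomorphisms. *)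
definition hom_twisting :: "'i set \<Rightarrow> 'j set
    \<Rightarrow> (('i \<times> 'i \<Rightarrow>\<^sub>0 'k::field) \<Rightarrow> ('i \<Rightarrow>\<^sub>0 'k)) \<Rightarrow> (('i \<Rightarrow>\<^sub>0 'k) \<Rightarrow> ('i \<Rightarrow>\<^sub>0 'k))
    \<Rightarrow> (('j \<times> 'j \<Rightarrow>\<^sub>0 'k) \<Rightarrow> ('j \<Rightarrow>\<^sub>0 'k)) \<Rightarrow> (('j \<Rightarrow>\<^sub>0 'k) \<Rightarrow> ('j \<Rightarrow>\<^sub>0 'k))
    \<Rightarrow> (('j \<times> 'i \<Rightarrow>\<^sub>0 'k) \<Rightarrow> ('i \<times> 'j \<Rightarrow>\<^sub>0 'k)) \<Rightarrow> bool" where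
  "hom_twisting I J muA alphaA muB alphaB R \<longleftrightarrow> is_lin (J \<times> I) (I \<times> J) R
     \<and> (\<forall>x\<in>fvs (J \<times> I). tmap alphaA alphaB (R x) = R (tmap alphaB alphaA x))
     \<and> (\<forall>x\<in>fvs ((J \<times> I) \<times> I).
          R (tmap alphaB muA (assocr x))
          = tmap muA alphaB (assocl (tmap id R (assocr (tmap R id x)))))
     \<and> (\<forall>x\<in>fvs (J \<times> (J \<times> I)).
          R (tmap muB alphaA (assocl x))
          = tmap alphaA muB (assocr (tmap R id (assocl (tmap id R x)))))"

(* For T : D \<otimes> D \<rightarrow> D \<otimes> D, triple tensors are bracketed as D \<otimes> (D \<otimes> D);
T12 = T \<otimes> id (transported along the associator), T23 = id \<otimes> T, and
T13 (d \<otimes> d' \<otimes> d'') = d^T \<otimes> d' \<otimes> d''_T. *)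
definition T12 :: "(('d \<times> 'd \<Rightarrow>\<^sub>0 'k::field) \<Rightarrow> ('d \<times> 'd \<Rightarrow>\<^sub>0 'k))
    \<Rightarrow> ('d \<times> ('d \<times> 'd) \<Rightarrow>\<^sub>0 'k) \<Rightarrow> ('d \<times> ('d \<times> 'd) \<Rightarrow>\<^sub>0 'k)" where
  "T12 T = assocr \<circ> tmap T id \<circ> assocl"

definition T23 :: "(('d \<times> 'd \<Rightarrow>\<^sub>0 'k::field) \<Rightarrow> ('d \<times> 'd \<Rightarrow>\<^sub>0 'k))
    \<Rightarrow> ('d \<times> ('d \<times> 'd) \<Rightarrow>\<^sub>0 'k) \<Rightarrow> ('d \<times> ('d \<times> 'd) \<Rightarrow>\<^sub>0 'k)" where
  "T23 T = tmap id T"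

definition T13 :: "(('d \<times> 'd \<Rightarrow>\<^sub>0 'k::field) \<Rightarrow> ('d \<times> 'd \<Rightarrow>\<^sub>0 'k))
    \<Rightarrow> ('d \<times> ('d \<times> 'd) \<Rightarrow>\<^sub>0 'k) \<Rightarrow> ('d \<times> ('d \<times> 'd) \<Rightarrow>\<^sub>0 'k)" where
  "T13 T = lext (\<lambda>(p, (q, r)).
      lext (\<lambda>(s, u). Poly_Mapping.single (s, (q, u)) 1) (T (Poly_Mapping.single (p, r) 1)))"

definition hom_twistor :: "'d set \<Rightarrow> (('d \<times> 'd \<Rightarrow>\<^sub>0 'k::field) \<Rightarrow> ('d \<Rightarrow>\<^sub>0 'k))
    \<Rightarrow> (('d \<Rightarrow>\<^sub>0 'k) \<Rightarrow> ('d \<Rightarrow>\<^sub>0 'k)) \<Rightarrow> (('d \<times> 'd \<Rightarrow>\<^sub>0 'k) \<Rightarrow> ('d \<times> 'd \<Rightarrow>\<^sub>0 'k)) \<Rightarrow> bool" where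
  "hom_twistor K mu alpha T \<longleftrightarrow> is_lin (K \<times> K) (K \<times> K) T
     \<and> (\<forall>x\<in>fvs (K \<times> K). tmap alpha alpha (T x) = T (tmap alpha alpha x))
     \<and> (\<forall>x\<in>fvs (K \<times> (K \<times> K)). T (tmap alpha mu x) = tmap alpha mu (T13 T (T12 T x)))
     \<and> (\<forall>x\<in>fvs (K \<times> (K \<times> K)).
          T (tmap mu alpha (assocl x)) = tmap mu alpha (assocl (T13 T (T23 T x))))
     \<and> (\<forall>x\<in>fvs (K \<times> (K \<times> K)). T12 T (T23 T x) = T23 T (T12 T x))"

definition twist_T :: "(('j \<times> 'i \<Rightarrow>\<^sub>0 'k::field) \<Rightarrow> ('i \<times> 'j \<Rightarrow>\<^sub>0 'k))
    \<Rightarrow> (('i \<times> 'j) \<times> ('i \<times> 'j) \<Rightarrow>\<^sub>0 'k) \<Rightarrow> (('i \<times> 'j) \<times> ('i \<times> 'j) \<Rightarrow>\<^sub>0 'k)" where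
  "twist_T R = lext (\<lambda>((i, j), (i', j')).
      lext (\<lambda>(s, t). Poly_Mapping.single ((i, t), (s, j')) 1) (R (Poly_Mapping.single (j, i') 1)))"

end

theory Submission
  imports Defs
begin

text \<open>Everything in sight is linear, so each identity only has to be checked on basis tensors,
where \<open>twist_T R\<close> is obtained from \<open>R\<close> by a relabelling of indices.  There, the compatibility
of \<open>T\<close> with \<open>\<alpha>\<close> and the two multiplicativity axioms of a Hom-twistor reduce, after expanding
\<open>T13\<close>, \<open>T12\<close> and \<open>T23\<close>, exactly to the compatibility of \<open>R\<close> with the structure maps and
to the two axioms of a Hom-twisting map; \<open>T12\<close> and \<open>T23\<close> commute because they apply \<open>R\<close>
to disjoint pairs of tensor factors.

The second claim holds for every Hom-twistor \<open>T\<close> of a Hom-associative algebra \<open>D\<close> (here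
\<open>D = A \<otimes> B\<close>, which is Hom-associative factorwise): in
\<open>\<alpha>(d) \<cdot>\<^sub>T (d' \<cdot>\<^sub>T d'')\<close> the two multiplicativity axioms move \<open>T\<close> past one product
each, the commutation of \<open>T12\<close> and \<open>T23\<close> reorders the two twists in between, and
Hom-associativity of \<open>D\<close> is used once in the middle.\<close>

abbreviation bv :: "'i \<Rightarrow> ('i \<Rightarrow>\<^sub>0 'k::field)" where
  "bv i \<equiv> Poly_Mapping.single i 1"

lemma lookup_smult [simp]: "Poly_Mapping.lookup (smult c x) k = c * Poly_Mapping.lookup x k"
  by (simp add: smult_def Poly_Mapping.map.rep_eq when_def)

lemma smult_add_right: "smult c (x + y) = smult c x + smult c y"
  by (rule poly_mapping_eqI) (simp add: lookup_add algebra_simps)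

lemma smult_add_left: "smult (a + b) x = smult a x + smult b x"
  by (rule poly_mapping_eqI) (simp add: lookup_add algebra_simps)

lemma smult_smult [simp]: "smult c (smult d x) = smult (c * d) x"
  by (rule poly_mapping_eqI) (simp add: algebra_simps)

lemma smult_one [simp]: "smult 1 x = x"
  by (rule poly_mapping_eqI) simp

lemma smult_zero_left [simp]: "smult 0 x = 0"
  by (rule poly_mapping_eqI) simp

lemma smult_zero_right [simp]: "smult c 0 = 0"
  by (rule poly_mapping_eqI) simp

lemma smult_single: "smult c (Poly_Mapping.single k v) = Poly_Mapping.single k (c * v)"
  by (rule poly_mapping_eqI) (simp add: lookup_single when_def)

lemma smult_sum: "smult c (sum f A) = (\<Sum>a\<in>A. smult c (f a))"
  by (induct A rule: infinite_finite_induct) (auto simp: smult_add_right)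

lemma keys_smult: "Poly_Mapping.keys (smult c x) \<subseteq> Poly_Mapping.keys x"
  by (auto simp: in_keys_iff)

lemma lext_superset:
  assumes "finite S" "Poly_Mapping.keys z \<subseteq> S"
  shows "lext g z = (\<Sum>i\<in>S. smult (Poly_Mapping.lookup z i) (g i))"
  unfolding lext_def
  by (rule sum.mono_neutral_left) (use assms in \<open>auto simp: in_keys_iff\<close>)

lemma lext_add: "lext g (x + y) = lext g x + lext g y"
proof -
  let ?S = "Poly_Mapping.keys x \<union> Poly_Mapping.keys y"
  have "lext g (x + y) = (\<Sum>i\<in>?S. smult (Poly_Mapping.lookup (x + y) i) (g i))"
    using keys_add[of x y] by (intro lext_superset) auto
  also have "\<dots> = (\<Sum>i\<in>?S. smult (Poly_Mapping.lookup x i) (g i))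
                 + (\<Sum>i\<in>?S. smult (Poly_Mapping.lookup y i) (g i))"
    by (simp add: lookup_add smult_add_left sum.distrib)
  also have "\<dots> = lext g x + lext g y"
    by (simp add: lext_superset[of ?S])
  finally show ?thesis .
qed

lemma lext_smult: "lext g (smult c x) = smult c (lext g x)"
proof -
  have "lext g (smult c x) = (\<Sum>i\<in>Poly_Mapping.keys x. smult (Poly_Mapping.lookup (smult c x) i) (g i))"
    using keys_smult[of c x] by (intro lext_superset) auto
  then show ?thesis
    by (simp add: lext_def smult_sum)
qed

lemma lext_bv [simp]: "lext g (bv i) = g i"
  by (subst lext_superset[of "{i}"]) auto

lemma lext_cong: "(\<And>i. i \<in> Poly_Mapping.keys z \<Longrightarrow> g i = h i) \<Longrightarrow> lext g z = lext h z"
  unfolding lext_def by (rule sum.cong) auto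

lemma lext_bv_id: "lext bv z = z"
  unfolding lext_def
  by (rule poly_mapping_eqI) (auto simp: lookup_sum smult_single lookup_single when_def in_keys_iff)

lemma lext_swap: "lext (\<lambda>a. lext (h a) w) z = lext (\<lambda>b. lext (\<lambda>a. h a b) z) w"
  unfolding lext_def by (simp add: smult_sum mult.commute sum.swap[of _ "Poly_Mapping.keys z"])

lemma fvs_zero [simp]: "0 \<in> fvs I"
  by (simp add: fvs_def)

lemma fvs_add [simp]: "x \<in> fvs I \<Longrightarrow> y \<in> fvs I \<Longrightarrow> x + y \<in> fvs I"
  using keys_add[of x y] by (auto simp: fvs_def)

lemma fvs_smult [simp]: "x \<in> fvs I \<Longrightarrow> smult c x \<in> fvs I"
  using keys_smult[of c x] by (auto simp: fvs_def)

lemma fvs_sum: "(\<And>a. a \<in> A \<Longrightarrow> f a \<in> fvs I) \<Longrightarrow> sum f A \<in> fvs I"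
  by (induct A rule: infinite_finite_induct) auto

lemma bv_in_fvs [simp]: "bv i \<in> fvs I \<longleftrightarrow> i \<in> I"
  by (simp add: fvs_def)

lemma fvs_UNIV [simp]: "x \<in> fvs UNIV"
  by (simp add: fvs_def)

lemma lext_fvs: "(\<And>i. i \<in> Poly_Mapping.keys z \<Longrightarrow> g i \<in> fvs L) \<Longrightarrow> lext g z \<in> fvs L"
  unfolding lext_def by (intro fvs_sum fvs_smult) auto

text \<open>Maps built by linear extension are linear on the whole space, whereas the structure maps
of the algebras are only assumed to be linear on their carriers; hence two notions.\<close>

definition lin_map :: "(('i \<Rightarrow>\<^sub>0 'k::field) \<Rightarrow> ('j \<Rightarrow>\<^sub>0 'k)) \<Rightarrow> bool" where
  "lin_map F \<longleftrightarrow> (\<forall>x y. F (x + y) = F x + F y) \<and> (\<forall>c x. F (smult c x) = smult c (F x))"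

definition lin_map_on :: "'i set \<Rightarrow> (('i \<Rightarrow>\<^sub>0 'k::field) \<Rightarrow> ('j \<Rightarrow>\<^sub>0 'k)) \<Rightarrow> bool" where
  "lin_map_on I F \<longleftrightarrow> (\<forall>x\<in>fvs I. \<forall>y\<in>fvs I. F (x + y) = F x + F y)
     \<and> (\<forall>c. \<forall>x\<in>fvs I. F (smult c x) = smult c (F x))"

lemma lin_map_lext [simp]: "lin_map (lext g)"
  by (simp add: lin_map_def lext_add lext_smult)

lemma lin_map_comp: "lin_map F \<Longrightarrow> lin_map G \<Longrightarrow> lin_map (\<lambda>x. F (G x))"
  by (simp add: lin_map_def)

lemma lin_map_ident [simp]: "lin_map (\<lambda>x. x)"
  by (simp add: lin_map_def)

lemma lin_map_imp_on: "lin_map F \<Longrightarrow> lin_map_on I F"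
  by (simp add: lin_map_def lin_map_on_def)

lemma is_lin_imp_lin_map_on: "is_lin I J F \<Longrightarrow> lin_map_on I F"
  by (simp add: is_lin_def lin_map_on_def)

lemma is_lin_fvs: "is_lin I J F \<Longrightarrow> x \<in> fvs I \<Longrightarrow> F x \<in> fvs J"
  by (simp add: is_lin_def)

lemma is_linI: "lin_map F \<Longrightarrow> (\<And>x. x \<in> fvs I \<Longrightarrow> F x \<in> fvs J) \<Longrightarrow> is_lin I J F"
  by (auto simp: is_lin_def lin_map_def)

lemma lin_map_on_comp:
  "lin_map_on I G \<Longrightarrow> (\<And>x. x \<in> fvs I \<Longrightarrow> G x \<in> fvs J) \<Longrightarrow> lin_map_on J F
    \<Longrightarrow> lin_map_on I (\<lambda>x. F (G x))"
  unfolding lin_map_on_def by (metis fvs_add fvs_smult)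

lemma lin_map_on_comp_left: "lin_map F \<Longrightarrow> lin_map_on I G \<Longrightarrow> lin_map_on I (\<lambda>x. F (G x))"
  by (simp add: lin_map_on_def lin_map_def)

lemma lin_map_on_comp_right:
  "lin_map_on J F \<Longrightarrow> lin_map G \<Longrightarrow> (\<And>x. x \<in> fvs I \<Longrightarrow> G x \<in> fvs J) \<Longrightarrow> lin_map_on I (\<lambda>x. F (G x))"
  by (simp add: lin_map_on_def lin_map_def)

lemma lin_map_on_sum:
  assumes "lin_map_on I F" "finite S" "S \<subseteq> I"
  shows "F (\<Sum>i\<in>S. smult (c i) (bv i)) = (\<Sum>i\<in>S. smult (c i) (F (bv i)))"
  using assms(2,3)
proof (induct S rule: finite_induct)
  case empty
  have "F 0 = 0"
    using assms(1) unfolding lin_map_on_def by (metis fvs_zero smult_zero_left smult_zero_right)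
  then show ?case by simp
next
  case (insert a S)
  have "(\<Sum>i\<in>S. smult (c i) (bv i)) \<in> fvs I" "bv a \<in> fvs I"
    using insert by (auto intro!: fvs_sum)
  then show ?case
    using insert assms(1) unfolding lin_map_on_def by simp
qed

lemma lin_map_on_lext_basis:
  assumes "lin_map_on I F" "z \<in> fvs I"
  shows "F z = lext (\<lambda>i. F (bv i)) z"
proof -
  have "F z = F (lext bv z)" by (simp add: lext_bv_id)
  also have "\<dots> = lext (\<lambda>i. F (bv i)) z"
    unfolding lext_def by (rule lin_map_on_sum) (use assms in \<open>auto simp: fvs_def\<close>)
  finally show ?thesis .
qed

lemma lin_map_on_eqI:
  assumes "lin_map_on I F" "lin_map_on I G" "\<And>k. k \<in> I \<Longrightarrow> F (bv k) = G (bv k)" "z \<in> fvs I"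
  shows "F z = G z"
proof -
  have "F z = lext (\<lambda>i. F (bv i)) z" by (rule lin_map_on_lext_basis[OF assms(1,4)])
  also have "\<dots> = lext (\<lambda>i. G (bv i)) z" using assms(3,4) by (intro lext_cong) (auto simp: fvs_def)
  also have "\<dots> = G z" by (rule lin_map_on_lext_basis[OF assms(2,4), symmetric])
  finally show ?thesis .
qed

lemma lin_map_eqI: "lin_map F \<Longrightarrow> lin_map G \<Longrightarrow> (\<And>k. F (bv k) = G (bv k)) \<Longrightarrow> F z = G z"
  by (rule lin_map_on_eqI[of UNIV]) (simp_all add: lin_map_imp_on)

lemma lin_map_fvs_eqI:
  "lin_map F \<Longrightarrow> lin_map G \<Longrightarrow> (\<And>k. k \<in> K \<Longrightarrow> F (bv k) = G (bv k)) \<Longrightarrow> \<forall>x\<in>fvs K. F x = G x"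
  by (blast intro: lin_map_on_eqI lin_map_imp_on)

lemma lin_map_lext_comm: "lin_map F \<Longrightarrow> F (lext g z) = lext (\<lambda>i. F (g i)) z"
  by (rule lin_map_eqI[where F="\<lambda>z. F (lext g z)"]) (simp_all add: lin_map_comp[of F])

lemma lin_map_lext_param: "(\<And>k. lin_map (\<lambda>a. h a k)) \<Longrightarrow> lin_map (\<lambda>a. lext (h a) w)"
  unfolding lin_map_def lext_def by (simp add: sum.distrib smult_add_right smult_sum mult.commute)

lemma lin_map_lext_basis: "lin_map F \<Longrightarrow> F z = lext (\<lambda>i. F (bv i)) z"
  using lin_map_lext_comm[of F bv z] by (simp add: lext_bv_id)

lemma finite_tensor_support:
  "finite {p. (\<lambda>(i, j). Poly_Mapping.lookup x i * Poly_Mapping.lookup y j) p \<noteq> (0::'k::field)}"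
proof (rule finite_subset)
  show "{p. (\<lambda>(i, j). Poly_Mapping.lookup x i * Poly_Mapping.lookup y j) p \<noteq> 0}
        \<subseteq> Poly_Mapping.keys x \<times> Poly_Mapping.keys y"
    by (auto simp: in_keys_iff)
qed simp

lemma lookup_tensor [simp]:
  "Poly_Mapping.lookup (tensor x y) (i, j) = Poly_Mapping.lookup x i * Poly_Mapping.lookup y j"
  unfolding tensor_def by (simp add: finite_tensor_support)

lemma keys_tensor: "Poly_Mapping.keys (tensor x y) \<subseteq> Poly_Mapping.keys x \<times> Poly_Mapping.keys y"
  by (auto simp: in_keys_iff)

lemma tensor_fvs [simp]: "x \<in> fvs I \<Longrightarrow> y \<in> fvs J \<Longrightarrow> tensor x y \<in> fvs (I \<times> J)"
  using keys_tensor[of x y] by (auto simp: fvs_def)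

lemma tensor_bv [simp]: "tensor (bv i) (bv j) = bv (i, j)"
  by (rule poly_mapping_eqI) (auto simp: lookup_single when_def split: if_splits)

lemma lin_map_tensor_left [simp]: "lin_map (\<lambda>x. tensor x y)"
  unfolding lin_map_def by (auto intro!: poly_mapping_eqI simp: lookup_add algebra_simps)

lemma lin_map_tensor_right [simp]: "lin_map (tensor x)"
  unfolding lin_map_def by (auto intro!: poly_mapping_eqI simp: lookup_add algebra_simps)

lemma lin_map_tensor_left_comp [simp]: "lin_map F \<Longrightarrow> lin_map (\<lambda>x. tensor (F x) y)"
  using lin_map_comp[OF lin_map_tensor_left] .

lemma lin_map_tensor_right_comp [simp]: "lin_map F \<Longrightarrow> lin_map (\<lambda>x. tensor y (F x))"
  using lin_map_comp[OF lin_map_tensor_right] .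

lemma bilinear_eqI:
  assumes "\<And>y. lin_map (\<lambda>x. F x y)" "\<And>y. lin_map (\<lambda>x. G x y)"
    and "\<And>x. lin_map (F x)" "\<And>x. lin_map (G x)"
    and "\<And>i j. F (bv i) (bv j) = G (bv i) (bv j)"
  shows "F x y = G x y"
proof -
  have "F (bv i) y = G (bv i) y" for i
    by (rule lin_map_eqI[where F="F (bv i)"]) (use assms in auto)
  then show ?thesis
    using lin_map_eqI[of "\<lambda>x. F x y" "\<lambda>x. G x y"] assms by blast
qed

lemma lin_map_tmap [simp]: "lin_map (tmap f g)"
  by (simp add: tmap_def)

lemma tmap_bv [simp]: "tmap f g (bv (i, j)) = tensor (f (bv i)) (g (bv j))"
  by (simp add: tmap_def)

lemma tmap_tensor:
  assumes "lin_map_on I f" "lin_map_on J g" "x \<in> fvs I" "y \<in> fvs J"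
  shows "tmap f g (tensor x y) = tensor (f x) (g y)"
proof -
  have "tmap f g (tensor (bv i) y) = tensor (f (bv i)) (g y)" for i
    by (rule lin_map_on_eqI[OF lin_map_imp_on[OF lin_map_comp[OF lin_map_tmap lin_map_tensor_right]]
          lin_map_on_comp_left[OF lin_map_tensor_right assms(2)] _ assms(4)]) simp
  then show ?thesis
    by (intro lin_map_on_eqI[OF lin_map_imp_on[OF lin_map_comp[OF lin_map_tmap lin_map_tensor_left]]
          lin_map_on_comp_left[OF lin_map_tensor_left assms(1)] _ assms(3)])
qed

lemma tmap_fvs:
  assumes "\<And>i. i \<in> I \<Longrightarrow> f (bv i) \<in> fvs I2" "\<And>j. j \<in> J \<Longrightarrow> g (bv j) \<in> fvs J2"
    and "x \<in> fvs (I \<times> J)"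
  shows "tmap f g x \<in> fvs (I2 \<times> J2)"
  unfolding tmap_def
proof (rule lext_fvs)
  fix p assume "p \<in> Poly_Mapping.keys x"
  then obtain i j where "p = (i, j)" "i \<in> I" "j \<in> J" using assms(3) by (auto simp: fvs_def)
  then show "(case p of (i, j) \<Rightarrow> tensor (f (bv i)) (g (bv j))) \<in> fvs (I2 \<times> J2)"
    using assms(1,2) by simp
qed

lemma lin_map_assocl [simp]: "lin_map assocl"
  by (simp add: assocl_def)

lemma lin_map_assocr [simp]: "lin_map assocr"
  by (simp add: assocr_def)

lemma assocl_bv [simp]: "assocl (bv (a, (b, c))) = bv ((a, b), c)"
  by (simp add: assocl_def)

lemma assocr_bv [simp]: "assocr (bv ((a, b), c)) = bv (a, (b, c))"
  by (simp add: assocr_def)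

lemma assocl_assocr [simp]: "assocl (assocr y) = y"
proof (rule lin_map_eqI[where F="\<lambda>y. assocl (assocr y)" and G="\<lambda>y. y"])
  show "assocl (assocr (bv k)) = bv k" for k :: "('a \<times> 'b) \<times> 'c"
    by (cases k) auto
qed (simp_all add: lin_map_comp[OF lin_map_assocl])

lemma assocl_fvs: "y \<in> fvs (A \<times> (B \<times> C)) \<Longrightarrow> assocl y \<in> fvs ((A \<times> B) \<times> C)"
  unfolding assocl_def by (rule lext_fvs) (auto simp: fvs_def split_beta)

lemma assocr_fvs: "y \<in> fvs ((A \<times> B) \<times> C) \<Longrightarrow> assocr y \<in> fvs (A \<times> (B \<times> C))"
  unfolding assocr_def by (rule lext_fvs) (auto simp: fvs_def split_beta)

lemma assocl_tensor: "assocl (tensor a (tensor b c)) = tensor (tensor a b) c"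
proof -
  have basis: "assocl (tensor (bv i) (tensor (bv j) c)) = tensor (tensor (bv i) (bv j)) c" for i j
    by (rule lin_map_eqI[where F="\<lambda>c. assocl (tensor (bv i) (tensor (bv j) c))"])
       (simp_all add: lin_map_comp[OF lin_map_assocl])
  show ?thesis
    by (rule bilinear_eqI[where F="\<lambda>a b. assocl (tensor a (tensor b c))"])
       (simp_all add: lin_map_comp[OF lin_map_assocl] basis)
qed

lemma lin_map_mid_swap [simp]: "lin_map mid_swap"
  by (simp add: mid_swap_def)

lemma mid_swap_bv [simp]: "mid_swap (bv ((i, j), (i', j'))) = bv ((i, i'), (j, j'))"
  by (simp add: mid_swap_def)

lemma mid_swap_fvs: "y \<in> fvs ((I \<times> J) \<times> (I \<times> J)) \<Longrightarrow> mid_swap y \<in> fvs ((I \<times> I) \<times> (J \<times> J))"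
  unfolding mid_swap_def by (rule lext_fvs) (auto simp: fvs_def split_beta)

lemma mid_swap_tensor:
  "mid_swap (tensor (tensor a b) (tensor a' b')) = tensor (tensor a a') (tensor b b')"
proof -
  have basis: "mid_swap (tensor (bv (i, j)) (tensor a' b'))
        = tensor (tensor (bv i) a') (tensor (bv j) b')" for i j
    by (rule bilinear_eqI[where F="\<lambda>a' b'. mid_swap (tensor (bv (i, j)) (tensor a' b'))"])
       (simp_all add: lin_map_comp[OF lin_map_mid_swap])
  show ?thesis
    by (rule bilinear_eqI[where F="\<lambda>a b. mid_swap (tensor (tensor a b) (tensor a' b'))"])
       (simp_all add: lin_map_comp[OF lin_map_mid_swap] basis)
qed

lemma hom_assoc_on_basisD:
  assumes "hom_assoc K mu al"
  shows "\<And>p q. p \<in> K \<Longrightarrow> q \<in> K \<Longrightarrow> al (mu (bv (p, q))) = mu (tensor (al (bv p)) (al (bv q)))"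
    and "\<And>p q r. p \<in> K \<Longrightarrow> q \<in> K \<Longrightarrow> r \<in> K \<Longrightarrow>
           mu (tensor (al (bv p)) (mu (bv (q, r)))) = mu (tensor (mu (bv (p, q))) (al (bv r)))"
  using assms unfolding hom_assoc_def by (metis bv_in_fvs tensor_bv)+

lemma hom_assoc_map_eqs:
  fixes mu :: "('a \<times> 'a \<Rightarrow>\<^sub>0 'k::field) \<Rightarrow> ('a \<Rightarrow>\<^sub>0 'k)"
  assumes mu: "is_lin (K \<times> K) K mu" and al: "is_lin K K al"
    and mult: "\<And>p q. p \<in> K \<Longrightarrow> q \<in> K \<Longrightarrow> al (mu (bv (p, q))) = mu (tensor (al (bv p)) (al (bv q)))"
    and assoc: "\<And>p q r. p \<in> K \<Longrightarrow> q \<in> K \<Longrightarrow> r \<in> K \<Longrightarrow>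
                  mu (tensor (al (bv p)) (mu (bv (q, r)))) = mu (tensor (mu (bv (p, q))) (al (bv r)))"
  shows "\<forall>y\<in>fvs (K \<times> K). al (mu y) = mu (tmap al al y)"
    and "\<forall>y\<in>fvs (K \<times> (K \<times> K)). mu (tmap al mu y) = mu (tmap mu al (assocl y))"
proof -
  have al_bv: "p \<in> K \<Longrightarrow> al (bv p) \<in> fvs K" for p using is_lin_fvs[OF al] by simp
  have mu_bv: "q \<in> K \<times> K \<Longrightarrow> mu (bv q) \<in> fvs K" for q using is_lin_fvs[OF mu] by simp
  note mu_on = is_lin_imp_lin_map_on[OF mu]
  show "\<forall>y\<in>fvs (K \<times> K). al (mu y) = mu (tmap al al y)"
  proof (rule ballI, rule lin_map_on_eqI[where F="\<lambda>y. al (mu y)" and G="\<lambda>y. mu (tmap al al y)"])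
    show "lin_map_on (K \<times> K) (\<lambda>y. al (mu y))"
      by (rule lin_map_on_comp[OF mu_on is_lin_fvs[OF mu] is_lin_imp_lin_map_on[OF al]])
    show "lin_map_on (K \<times> K) (\<lambda>y. mu (tmap al al y))"
      by (rule lin_map_on_comp_right[OF mu_on lin_map_tmap]) (rule tmap_fvs, simp_all add: al_bv)
  qed (use mult in auto)
  show "\<forall>y\<in>fvs (K \<times> (K \<times> K)). mu (tmap al mu y) = mu (tmap mu al (assocl y))"
  proof (rule ballI, rule lin_map_on_eqI[where F="\<lambda>y. mu (tmap al mu y)"
        and G="\<lambda>y. mu (tmap mu al (assocl y))"])
    show "lin_map_on (K \<times> (K \<times> K)) (\<lambda>y. mu (tmap al mu y))"
      by (rule lin_map_on_comp_right[OF mu_on lin_map_tmap]) (rule tmap_fvs, simp_all add: al_bv mu_bv)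
    show "lin_map_on (K \<times> (K \<times> K)) (\<lambda>y. mu (tmap mu al (assocl y)))"
      by (rule lin_map_on_comp_right[OF mu_on lin_map_comp[OF lin_map_tmap lin_map_assocl]])
         (rule tmap_fvs[where I="K \<times> K" and J=K], auto simp: al_bv mu_bv intro: assocl_fvs)
  qed (use assoc in auto)
qed

lemma hom_assoc_on_basisI:
  fixes mu :: "('a \<times> 'a \<Rightarrow>\<^sub>0 'k::field) \<Rightarrow> ('a \<Rightarrow>\<^sub>0 'k)"
  assumes mu: "is_lin (K \<times> K) K mu" and al: "is_lin K K al"
    and mult: "\<And>p q. p \<in> K \<Longrightarrow> q \<in> K \<Longrightarrow> al (mu (bv (p, q))) = mu (tensor (al (bv p)) (al (bv q)))"
    and assoc: "\<And>p q r. p \<in> K \<Longrightarrow> q \<in> K \<Longrightarrow> r \<in> K \<Longrightarrow>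
                  mu (tensor (al (bv p)) (mu (bv (q, r)))) = mu (tensor (mu (bv (p, q))) (al (bv r)))"
  shows "hom_assoc K mu al"
proof -
  note eqs = hom_assoc_map_eqs[OF mu al mult assoc]
  note mu_on = is_lin_imp_lin_map_on[OF mu] and al_on = is_lin_imp_lin_map_on[OF al]
  have "al (mu (tensor a a')) = mu (tensor (al a) (al a'))" if "a \<in> fvs K" "a' \<in> fvs K" for a a'
    using eqs(1) tmap_tensor[OF al_on al_on that] that by simp
  moreover have "mu (tensor (al a) (mu (tensor a' a''))) = mu (tensor (mu (tensor a a')) (al a''))"
    if "a \<in> fvs K" "a' \<in> fvs K" "a'' \<in> fvs K" for a a' a''
  proof -
    have "mu (tensor (al a) (mu (tensor a' a''))) = mu (tmap al mu (tensor a (tensor a' a'')))"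
      using tmap_tensor[OF al_on mu_on] that by simp
    also have "\<dots> = mu (tmap mu al (tensor (tensor a a') a''))"
      using eqs(2) that by (simp add: assocl_tensor)
    also have "\<dots> = mu (tensor (mu (tensor a a')) (al a''))"
      using tmap_tensor[OF mu_on al_on] that by simp
    finally show ?thesis .
  qed
  ultimately show ?thesis
    unfolding hom_assoc_def using mu al by blast
qed

lemma lin_map_tensor_mult [simp]: "lin_map (tensor_mult muA muB)"
  unfolding tensor_mult_def comp_def by (rule lin_map_comp[OF lin_map_tmap lin_map_mid_swap])

lemma tensor_mult_bv [simp]:
  "tensor_mult muA muB (bv ((i, j), (i', j'))) = tensor (muA (bv (i, i'))) (muB (bv (j, j')))"
  by (simp add: tensor_mult_def)

lemma tensor_mult_tensor:
  assumes "lin_map_on (I \<times> I) muA" "lin_map_on (J \<times> J) muB"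
    and "a \<in> fvs I" "a' \<in> fvs I" "b \<in> fvs J" "b' \<in> fvs J"
  shows "tensor_mult muA muB (tensor (tensor a b) (tensor a' b'))
         = tensor (muA (tensor a a')) (muB (tensor b b'))"
  unfolding tensor_mult_def comp_def mid_swap_tensor
  by (rule tmap_tensor[OF assms(1,2)]) (simp_all add: assms)

lemma is_lin_tmap:
  "is_lin I I2 f \<Longrightarrow> is_lin J J2 g \<Longrightarrow> is_lin (I \<times> J) (I2 \<times> J2) (tmap f g)"
  by (intro is_linI lin_map_tmap tmap_fvs) (auto intro: is_lin_fvs)

lemma is_lin_tensor_mult:
  fixes muA :: "('i \<times> 'i \<Rightarrow>\<^sub>0 'k::field) \<Rightarrow> ('i \<Rightarrow>\<^sub>0 'k)"
    and muB :: "('j \<times> 'j \<Rightarrow>\<^sub>0 'k) \<Rightarrow> ('j \<Rightarrow>\<^sub>0 'k)"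
  assumes "is_lin (I \<times> I) I muA" "is_lin (J \<times> J) J muB"
  shows "is_lin ((I \<times> J) \<times> (I \<times> J)) (I \<times> J) (tensor_mult muA muB)"
proof (rule is_linI)
  fix x :: "('i \<times> 'j) \<times> ('i \<times> 'j) \<Rightarrow>\<^sub>0 'k" assume "x \<in> fvs ((I \<times> J) \<times> (I \<times> J))"
  then have "mid_swap x \<in> fvs ((I \<times> I) \<times> (J \<times> J))" by (rule mid_swap_fvs)
  then show "tensor_mult muA muB x \<in> fvs (I \<times> J)"
    unfolding tensor_mult_def comp_def
    by (rule tmap_fvs[rotated 2]) (auto intro: is_lin_fvs[OF assms(1)] is_lin_fvs[OF assms(2)])
qed simp

lemma hom_assoc_tensor_mult:
  assumes A: "hom_assoc I muA alphaA" and B: "hom_assoc J muB alphaB"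
  shows "hom_assoc (I \<times> J) (tensor_mult muA muB) (tmap alphaA alphaB)"
proof -
  have lin: "is_lin (I \<times> I) I muA" "is_lin I I alphaA" "is_lin (J \<times> J) J muB" "is_lin J J alphaB"
    using A B by (simp_all add: hom_assoc_def)
  note fvs = is_lin_fvs[OF lin(1)] is_lin_fvs[OF lin(2)] is_lin_fvs[OF lin(3)] is_lin_fvs[OF lin(4)]
  note mult = tensor_mult_tensor[OF is_lin_imp_lin_map_on[OF lin(1)] is_lin_imp_lin_map_on[OF lin(3)]]
  note alpha = tmap_tensor[OF is_lin_imp_lin_map_on[OF lin(2)] is_lin_imp_lin_map_on[OF lin(4)]]
  show ?thesis
  proof (rule hom_assoc_on_basisI[OF is_lin_tensor_mult[OF lin(1,3)] is_lin_tmap[OF lin(2,4)]])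
    fix p q assume "p \<in> I \<times> J" "q \<in> I \<times> J"
    then obtain i j i' j' where pq: "p = (i, j)" "q = (i', j')" "i \<in> I" "j \<in> J" "i' \<in> I" "j' \<in> J"
      by blast
    show "tmap alphaA alphaB (tensor_mult muA muB (bv (p, q)))
        = tensor_mult muA muB (tensor (tmap alphaA alphaB (bv p)) (tmap alphaA alphaB (bv q)))"
      using hom_assoc_on_basisD(1)[OF A, of i i'] hom_assoc_on_basisD(1)[OF B, of j j'] pq
      by (simp add: alpha mult fvs)
  next
    fix p q r assume "p \<in> I \<times> J" "q \<in> I \<times> J" "r \<in> I \<times> J"
    then obtain i j i' j' i'' j'' where pqr: "p = (i, j)" "q = (i', j')" "r = (i'', j'')"
      "i \<in> I" "j \<in> J" "i' \<in> I" "j' \<in> J" "i'' \<in> I" "j'' \<in> J"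
      by blast
    show "tensor_mult muA muB (tensor (tmap alphaA alphaB (bv p)) (tensor_mult muA muB (bv (q, r))))
        = tensor_mult muA muB (tensor (tensor_mult muA muB (bv (p, q))) (tmap alphaA alphaB (bv r)))"
      using hom_assoc_on_basisD(2)[OF A, of i i' i''] hom_assoc_on_basisD(2)[OF B, of j j' j''] pqr
      by (simp add: mult fvs)
  qed
qed

lemma lin_map_T12 [simp]: "lin_map (T12 T)"
  unfolding T12_def comp_def
  by (rule lin_map_comp[OF lin_map_assocr lin_map_comp[OF lin_map_tmap lin_map_assocl]])

lemma lin_map_T23 [simp]: "lin_map (T23 T)"
  by (simp add: T23_def)

lemma lin_map_T13 [simp]: "lin_map (T13 T)"
  by (simp add: T13_def)

lemma T12_bv: "T12 T (bv (p, (q, r))) = assocr (tensor (T (bv (p, q))) (bv r))"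
  by (simp add: T12_def)

lemma T23_bv: "T23 T (bv (p, (q, r))) = tensor (bv p) (T (bv (q, r)))"
  by (simp add: T23_def)

lemma T13_bv [simp]: "T13 T (bv (p, (q, r))) = lext (\<lambda>(s, u). bv (s, (q, u))) (T (bv (p, r)))"
  by (simp add: T13_def)

context
  fixes K :: "'d set" and T :: "('d \<times> 'd \<Rightarrow>\<^sub>0 'k::field) \<Rightarrow> ('d \<times> 'd \<Rightarrow>\<^sub>0 'k)"
  assumes T_bv_fvs: "\<And>k. k \<in> K \<times> K \<Longrightarrow> T (bv k) \<in> fvs (K \<times> K)"
begin

lemma T12_fvs: "x \<in> fvs (K \<times> (K \<times> K)) \<Longrightarrow> T12 T x \<in> fvs (K \<times> (K \<times> K))"
  unfolding T12_def comp_def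
  by (rule assocr_fvs, rule tmap_fvs[where I="K \<times> K" and J=K]) (auto intro: T_bv_fvs assocl_fvs)

lemma T23_fvs: "x \<in> fvs (K \<times> (K \<times> K)) \<Longrightarrow> T23 T x \<in> fvs (K \<times> (K \<times> K))"
  unfolding T23_def by (rule tmap_fvs[where I=K and J="K \<times> K"]) (auto intro: T_bv_fvs)

lemma T13_fvs:
  assumes x: "x \<in> fvs (K \<times> (K \<times> K))"
  shows "T13 T x \<in> fvs (K \<times> (K \<times> K))"
  unfolding T13_def
proof (rule lext_fvs)
  fix k assume "k \<in> Poly_Mapping.keys x"
  with x obtain p q r where k: "k = (p, (q, r))" "p \<in> K" "q \<in> K" "r \<in> K"
    by (auto simp: fvs_def)
  have "lext (\<lambda>(s, u). bv (s, (q, u))) (T (bv (p, r))) \<in> fvs (K \<times> (K \<times> K))"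
    using T_bv_fvs[of "(p, r)"] k by (intro lext_fvs) (auto simp: fvs_def)
  then show "(case k of (p, q, r) \<Rightarrow> lext (\<lambda>(s, u). bv (s, (q, u))) (T (bv (p, r))))
               \<in> fvs (K \<times> (K \<times> K))"
    using k by simp
qed

end

lemma hom_assoc_twisted:
  fixes mu :: "('d \<times> 'd \<Rightarrow>\<^sub>0 'k::field) \<Rightarrow> ('d \<Rightarrow>\<^sub>0 'k)"
  assumes D: "hom_assoc K mu al" and tw: "hom_twistor K mu al T"
  shows "hom_assoc K (mu \<circ> T) al"
proof -
  have mu: "is_lin (K \<times> K) K mu" and al: "is_lin K K al"
    using D by (simp_all add: hom_assoc_def)
  have T: "is_lin (K \<times> K) (K \<times> K) T"
    and T_alpha: "\<forall>x\<in>fvs (K \<times> K). tmap al al (T x) = T (tmap al al x)"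
    and T_left: "\<forall>x\<in>fvs (K \<times> (K \<times> K)). T (tmap al mu x) = tmap al mu (T13 T (T12 T x))"
    and T_right: "\<forall>x\<in>fvs (K \<times> (K \<times> K)).
                    T (tmap mu al (assocl x)) = tmap mu al (assocl (T13 T (T23 T x)))"
    and T_commute: "\<forall>x\<in>fvs (K \<times> (K \<times> K)). T12 T (T23 T x) = T23 T (T12 T x)"
    using tw by (simp_all add: hom_twistor_def)
  note eqs = hom_assoc_map_eqs[OF mu al hom_assoc_on_basisD[OF D]]
  have T_bv: "k \<in> K \<times> K \<Longrightarrow> T (bv k) \<in> fvs (K \<times> K)" for k
    using is_lin_fvs[OF T] by simp
  have T12: "T12 T y \<in> fvs (K \<times> (K \<times> K))"
    and T23: "T23 T y \<in> fvs (K \<times> (K \<times> K))"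
    and T13: "T13 T y \<in> fvs (K \<times> (K \<times> K))" if "y \<in> fvs (K \<times> (K \<times> K))" for y
    using T12_fvs[of K T y] T23_fvs[of K T y] T13_fvs[of K T y] T_bv that by blast+
  have muT: "is_lin (K \<times> K) K (mu \<circ> T)"
    unfolding is_lin_def comp_def
    using lin_map_on_comp[OF is_lin_imp_lin_map_on[OF T] is_lin_fvs[OF T] is_lin_imp_lin_map_on[OF mu]]
    by (simp add: lin_map_on_def is_lin_fvs[OF mu] is_lin_fvs[OF T])
  show ?thesis
  proof (rule hom_assoc_on_basisI[OF muT al])
    fix p q assume "p \<in> K" "q \<in> K"
    then have pq: "bv (p, q) \<in> fvs (K \<times> K)" by simp
    have "al (mu (T (bv (p, q)))) = mu (tmap al al (T (bv (p, q))))"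
      using eqs(1) is_lin_fvs[OF T pq] by blast
    also have "\<dots> = mu (T (tensor (al (bv p)) (al (bv q))))"
      using T_alpha pq by simp
    finally show "al ((mu \<circ> T) (bv (p, q))) = (mu \<circ> T) (tensor (al (bv p)) (al (bv q)))"
      by simp
  next
    fix p q r assume pqr: "p \<in> K" "q \<in> K" "r \<in> K"
    define x :: "'d \<times> ('d \<times> 'd) \<Rightarrow>\<^sub>0 'k" where "x = bv (p, (q, r))"
    have x: "x \<in> fvs (K \<times> (K \<times> K))" using pqr by (simp add: x_def)
    have lhs: "tensor (al (bv p)) (mu (T (bv (q, r)))) = tmap al mu (T23 T x)"
      using tmap_tensor[OF is_lin_imp_lin_map_on[OF al] is_lin_imp_lin_map_on[OF mu], of "bv p" "T (bv (q, r))"]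
        pqr T_bv[of "(q, r)"] by (simp add: x_def T23_bv)
    have rhs: "tensor (mu (T (bv (p, q)))) (al (bv r)) = tmap mu al (assocl (T12 T x))"
      using tmap_tensor[OF is_lin_imp_lin_map_on[OF mu] is_lin_imp_lin_map_on[OF al], of "T (bv (p, q))" "bv r"]
        pqr T_bv[of "(p, q)"] by (simp add: x_def T12_bv)
    have "mu (T (tmap al mu (T23 T x))) = mu (tmap al mu (T13 T (T12 T (T23 T x))))"
      using T_left T23[OF x] by simp
    also have "\<dots> = mu (tmap mu al (assocl (T13 T (T12 T (T23 T x)))))"
      using eqs(2) T13[OF T12[OF T23[OF x]]] by blast
    also have "\<dots> = mu (tmap mu al (assocl (T13 T (T23 T (T12 T x)))))"
      using T_commute x by simp
    also have "\<dots> = mu (T (tmap mu al (assocl (T12 T x))))"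
      using T_right T12[OF x] by simp
    finally show "(mu \<circ> T) (tensor (al (bv p)) ((mu \<circ> T) (bv (q, r))))
                = (mu \<circ> T) (tensor ((mu \<circ> T) (bv (p, q))) (al (bv r)))"
      by (simp add: lhs rhs)
  qed
qed

text \<open>With \<open>R (b \<otimes> a') = a'\<^sub>R \<otimes> b\<^sub>R\<close>, \<open>sandwich a (R (b \<otimes> a')) b'\<close> is the paper's
\<open>(a \<otimes> b\<^sub>R) \<otimes> (a'\<^sub>R \<otimes> b')\<close>.\<close>

definition sandwich :: "('i \<Rightarrow>\<^sub>0 'k::field) \<Rightarrow> ('i \<times> 'j \<Rightarrow>\<^sub>0 'k) \<Rightarrow> ('j \<Rightarrow>\<^sub>0 'k)
    \<Rightarrow> (('i \<times> 'j) \<times> ('i \<times> 'j) \<Rightarrow>\<^sub>0 'k)" where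
  "sandwich a w b' = lext (\<lambda>(s, t). tensor (tensor a (bv t)) (tensor (bv s) b')) w"

lemma lin_map_sandwich [simp]: "lin_map (\<lambda>w. sandwich a w b')"
  by (simp add: sandwich_def)

lemma lin_map_sandwich_left [simp]: "lin_map (\<lambda>a. sandwich a w b')"
  unfolding sandwich_def by (rule lin_map_lext_param) (simp add: split_beta)

lemma lin_map_sandwich_right [simp]: "lin_map (\<lambda>b'. sandwich a w b')"
  unfolding sandwich_def by (rule lin_map_lext_param) (simp add: split_beta)

lemma sandwich_bv [simp]: "sandwich a (bv (s, t)) b' = tensor (tensor a (bv t)) (tensor (bv s) b')"
  by (simp add: sandwich_def)

lemma sandwich_tensor: "sandwich a (tensor x y) b' = tensor (tensor a y) (tensor x b')"
  by (rule bilinear_eqI[where F="\<lambda>x y. sandwich a (tensor x y) b'"])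
     (simp_all add: lin_map_comp[OF lin_map_sandwich])

lemma lin_map_twist_T [simp]: "lin_map (twist_T R)"
  by (simp add: twist_T_def)

lemma twist_T_bv:
  "twist_T R (bv ((i, j), (i', j'))) = lext (\<lambda>(s, t). bv ((i, t), (s, j'))) (R (bv (j, i')))"
  by (simp add: twist_T_def)

lemma twist_T_tensor:
  assumes R: "lin_map_on (J \<times> I) R" and b: "b \<in> fvs J" and a': "a' \<in> fvs I"
  shows "twist_T R (tensor (tensor a b) (tensor a' b')) = sandwich a (R (tensor b a')) b'"
proof -
  have middle: "twist_T R (tensor (tensor (bv i) b) (tensor a' (bv j')))
                = sandwich (bv i) (R (tensor b a')) (bv j')"
    if b: "b \<in> fvs J" and a': "a' \<in> fvs I" for i j' b a'
  proof (rule lin_map_on_eqI[OF _ _ _ b,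
        where F="\<lambda>b. twist_T R (tensor (tensor (bv i) b) (tensor a' (bv j')))"
          and G="\<lambda>b. sandwich (bv i) (R (tensor b a')) (bv j')"])
    show "lin_map_on J (\<lambda>b. twist_T R (tensor (tensor (bv i) b) (tensor a' (bv j'))))"
      by (rule lin_map_imp_on) (simp add: lin_map_comp[OF lin_map_twist_T])
    show "lin_map_on J (\<lambda>b. sandwich (bv i) (R (tensor b a')) (bv j'))"
      by (rule lin_map_on_comp_left[OF lin_map_sandwich lin_map_on_comp_right[OF R lin_map_tensor_left]])
         (simp add: a')
  next
    fix j assume "j \<in> J"
    show "twist_T R (tensor (tensor (bv i) (bv j)) (tensor a' (bv j')))
        = sandwich (bv i) (R (tensor (bv j) a')) (bv j')"
    proof (rule lin_map_on_eqI[OF _ _ _ a',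
          where F="\<lambda>a'. twist_T R (tensor (tensor (bv i) (bv j)) (tensor a' (bv j')))"
            and G="\<lambda>a'. sandwich (bv i) (R (tensor (bv j) a')) (bv j')"])
      show "lin_map_on I (\<lambda>a'. twist_T R (tensor (tensor (bv i) (bv j)) (tensor a' (bv j'))))"
        by (rule lin_map_imp_on) (simp add: lin_map_comp[OF lin_map_twist_T])
      show "lin_map_on I (\<lambda>a'. sandwich (bv i) (R (tensor (bv j) a')) (bv j'))"
        by (rule lin_map_on_comp_left[OF lin_map_sandwich lin_map_on_comp_right[OF R lin_map_tensor_right]])
           (simp add: \<open>j \<in> J\<close>)
    qed (simp add: twist_T_bv sandwich_def)
  qed
  show ?thesis
    by (rule bilinear_eqI[where F="\<lambda>a b'. twist_T R (tensor (tensor a b) (tensor a' b'))"])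
       (simp_all add: lin_map_comp[OF lin_map_twist_T] middle[OF b a'])
qed

lemmas lin_map_comp_simps =
  lin_map_comp[OF lin_map_tmap] lin_map_comp[OF lin_map_assocl] lin_map_comp[OF lin_map_assocr]
  lin_map_comp[OF lin_map_twist_T] lin_map_comp[OF lin_map_T12] lin_map_comp[OF lin_map_T23]
  lin_map_comp[OF lin_map_T13]

lemmas lext_push =
  lin_map_lext_comm[OF lin_map_tmap] lin_map_lext_comm[OF lin_map_assocl]
  lin_map_lext_comm[OF lin_map_assocr] lin_map_lext_comm[OF lin_map_twist_T]
  lin_map_lext_comm[OF lin_map_T13] lin_map_lext_comm[OF lin_map_lext]
  lin_map_lext_comm[OF lin_map_sandwich] lin_map_lext_comm[OF lin_map_tensor_left]
  lin_map_lext_comm[OF lin_map_tensor_right]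

text \<open>Both sides apply \<open>R\<close> once to \<open>(j, i')\<close> and once to \<open>(j', i'')\<close>; they differ only in
the order of the two expansions.\<close>

lemma twist_T_T12_T23_commute:
  fixes R :: "('j \<times> 'i \<Rightarrow>\<^sub>0 'k::field) \<Rightarrow> ('i \<times> 'j \<Rightarrow>\<^sub>0 'k)"
  shows "T12 (twist_T R) (T23 (twist_T R) x) = T23 (twist_T R) (T12 (twist_T R) x)"
proof (rule lin_map_eqI[where F="\<lambda>x. T12 (twist_T R) (T23 (twist_T R) x)"])
  fix k :: "('i \<times> 'j) \<times> (('i \<times> 'j) \<times> ('i \<times> 'j))"
  obtain i j i' j' i'' j'' where k: "k = ((i, j), ((i', j'), (i'', j'')))"
    by (metis prod.collapse)
  have "T12 (twist_T R) (T23 (twist_T R) (bv k))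
      = lext (\<lambda>(s, t). lext (\<lambda>(s', t'). bv ((i, t'), ((s', t), (s, j''))))
          (R (bv (j, i')))) (R (bv (j', i'')))"
    by (simp add: k T12_def T23_def twist_T_bv lext_push split_beta split_beta')
  also have "\<dots> = lext (\<lambda>(s', t'). lext (\<lambda>(s, t). bv ((i, t'), ((s', t), (s, j''))))
                      (R (bv (j', i'')))) (R (bv (j, i')))"
    by (simp add: split_beta' lext_swap[where z="R (bv (j', i''))"])
  also have "\<dots> = T23 (twist_T R) (T12 (twist_T R) (bv k))"
    by (simp add: k T12_def T23_def twist_T_bv lext_push split_beta split_beta')
  finally show "T12 (twist_T R) (T23 (twist_T R) (bv k))
              = T23 (twist_T R) (T12 (twist_T R) (bv k))" .
qed (simp_all add: lin_map_comp_simps)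

locale hom_twisted_tensor =
  fixes I :: "'i set" and J :: "'j set"
    and muA :: "('i \<times> 'i \<Rightarrow>\<^sub>0 'k::field) \<Rightarrow> ('i \<Rightarrow>\<^sub>0 'k)" and alphaA :: "('i \<Rightarrow>\<^sub>0 'k) \<Rightarrow> ('i \<Rightarrow>\<^sub>0 'k)"
    and muB :: "('j \<times> 'j \<Rightarrow>\<^sub>0 'k) \<Rightarrow> ('j \<Rightarrow>\<^sub>0 'k)" and alphaB :: "('j \<Rightarrow>\<^sub>0 'k) \<Rightarrow> ('j \<Rightarrow>\<^sub>0 'k)"
    and R :: "('j \<times> 'i \<Rightarrow>\<^sub>0 'k) \<Rightarrow> ('i \<times> 'j \<Rightarrow>\<^sub>0 'k)"
  assumes A: "hom_assoc I muA alphaA"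
    and B: "hom_assoc J muB alphaB"
    and twisting: "hom_twisting I J muA alphaA muB alphaB R"
begin

lemma is_lin_muA: "is_lin (I \<times> I) I muA"
  and is_lin_alphaA: "is_lin I I alphaA"
  and is_lin_muB: "is_lin (J \<times> J) J muB"
  and is_lin_alphaB: "is_lin J J alphaB"
  and is_lin_R: "is_lin (J \<times> I) (I \<times> J) R"
  using A B twisting by (simp_all add: hom_assoc_def hom_twisting_def)

lemma basis_images_fvs:
  "i \<in> I \<Longrightarrow> i' \<in> I \<Longrightarrow> muA (bv (i, i')) \<in> fvs I"
  "j \<in> J \<Longrightarrow> j' \<in> J \<Longrightarrow> muB (bv (j, j')) \<in> fvs J"
  "i \<in> I \<Longrightarrow> alphaA (bv i) \<in> fvs I"
  "j \<in> J \<Longrightarrow> alphaB (bv j) \<in> fvs J"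
  "j \<in> J \<Longrightarrow> i \<in> I \<Longrightarrow> R (bv (j, i)) \<in> fvs (I \<times> J)"
  using is_lin_fvs[OF is_lin_muA] is_lin_fvs[OF is_lin_muB] is_lin_fvs[OF is_lin_alphaA]
    is_lin_fvs[OF is_lin_alphaB] is_lin_fvs[OF is_lin_R] by simp_all

lemma R_alpha_bv:
  assumes "j \<in> J" "i \<in> I"
  shows "R (tensor (alphaB (bv j)) (alphaA (bv i))) = tmap alphaA alphaB (R (bv (j, i)))"
  using twisting assms unfolding hom_twisting_def by (metis bv_in_fvs mem_Sigma_iff tmap_bv)

lemma R_mult_left_bv:
  assumes "j \<in> J" "i' \<in> I" "i'' \<in> I"
  shows "R (tensor (alphaB (bv j)) (muA (bv (i', i'')))) =
    lext (\<lambda>(s, t). lext (\<lambda>(s', t'). tensor (muA (bv (s, s'))) (alphaB (bv t'))) (R (bv (t, i''))))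
      (R (bv (j, i')))"
proof -
  have inner: "tmap muA alphaB (assocl (tensor (bv s) w))
             = lext (\<lambda>(s', t'). tensor (muA (bv (s, s'))) (alphaB (bv t'))) w" for s w
    by (rule lin_map_eqI[where F="\<lambda>w. tmap muA alphaB (assocl (tensor (bv s) w))"])
       (auto simp: lin_map_comp_simps)
  have outer: "tmap muA alphaB (assocl (tmap id R (assocr (tensor z (bv i'')))))
             = lext (\<lambda>(s, t). lext (\<lambda>(s', t'). tensor (muA (bv (s, s'))) (alphaB (bv t')))
                 (R (bv (t, i'')))) z" for z
    by (rule lin_map_eqI[where F="\<lambda>z. tmap muA alphaB (assocl (tmap id R (assocr (tensor z (bv i'')))))"])
       (auto simp: lin_map_comp_simps inner)
  have "R (tensor (alphaB (bv j)) (muA (bv (i', i''))))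
      = tmap muA alphaB (assocl (tmap id R (assocr (tensor (R (bv (j, i'))) (bv i'')))))"
    using twisting assms unfolding hom_twisting_def
    by (metis (no_types, lifting) assocr_bv bv_in_fvs id_apply mem_Sigma_iff tmap_bv)
  then show ?thesis
    by (simp only: outer)
qed

lemma R_mult_right_bv:
  assumes "j \<in> J" "j' \<in> J" "i'' \<in> I"
  shows "R (tensor (muB (bv (j, j'))) (alphaA (bv i''))) =
    lext (\<lambda>(s, t). lext (\<lambda>(s', t'). tensor (alphaA (bv s')) (muB (bv (t', t)))) (R (bv (j, s))))
      (R (bv (j', i'')))"
proof -
  have inner: "tmap alphaA muB (assocr (tensor z (bv t)))
             = lext (\<lambda>(s', t'). tensor (alphaA (bv s')) (muB (bv (t', t)))) z" for z t
    by (rule lin_map_eqI[where F="\<lambda>z. tmap alphaA muB (assocr (tensor z (bv t)))"])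
       (auto simp: lin_map_comp_simps)
  have outer: "tmap alphaA muB (assocr (tmap R id (assocl (tensor (bv j) w))))
             = lext (\<lambda>(s, t). lext (\<lambda>(s', t'). tensor (alphaA (bv s')) (muB (bv (t', t))))
                 (R (bv (j, s)))) w" for w
    by (rule lin_map_eqI[where F="\<lambda>w. tmap alphaA muB (assocr (tmap R id (assocl (tensor (bv j) w))))"])
       (auto simp: lin_map_comp_simps inner)
  have "R (tensor (muB (bv (j, j'))) (alphaA (bv i'')))
      = tmap alphaA muB (assocr (tmap R id (assocl (tensor (bv j) (R (bv (j', i'')))))))"
    using twisting assms unfolding hom_twisting_def
    by (metis (no_types, lifting) assocl_bv bv_in_fvs id_apply mem_Sigma_iff tmap_bv)
  then show ?thesis
    by (simp only: outer)
qed

lemma twist_T_bv_fvs: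
  assumes "k \<in> (I \<times> J) \<times> (I \<times> J)"
  shows "twist_T R (bv k) \<in> fvs ((I \<times> J) \<times> (I \<times> J))"
proof -
  obtain i j i' j' where k: "k = ((i, j), (i', j'))" "i \<in> I" "j \<in> J" "i' \<in> I" "j' \<in> J"
    using assms by auto
  have "lext (\<lambda>(s, t). bv ((i, t), (s, j'))) (R (bv (j, i'))) \<in> fvs ((I \<times> J) \<times> (I \<times> J))"
    using basis_images_fvs(5)[of j i'] k by (intro lext_fvs) (auto simp: fvs_def)
  then show ?thesis
    using k by (simp add: twist_T_bv)
qed

lemma is_lin_twist_T: "is_lin ((I \<times> J) \<times> (I \<times> J)) ((I \<times> J) \<times> (I \<times> J)) (twist_T R)"
proof (rule is_linI)
  fix x :: "('i \<times> 'j) \<times> ('i \<times> 'j) \<Rightarrow>\<^sub>0 'k"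
  assume x: "x \<in> fvs ((I \<times> J) \<times> (I \<times> J))"
  have "twist_T R x = lext (\<lambda>k. twist_T R (bv k)) x"
    by (rule lin_map_lext_basis) simp
  also have "\<dots> \<in> fvs ((I \<times> J) \<times> (I \<times> J))"
    using x by (intro lext_fvs twist_T_bv_fvs) (auto simp: fvs_def)
  finally show "twist_T R x \<in> fvs ((I \<times> J) \<times> (I \<times> J))" .
qed simp

lemma twist_T_alpha:
  "\<forall>x\<in>fvs ((I \<times> J) \<times> (I \<times> J)).
     tmap (tmap alphaA alphaB) (tmap alphaA alphaB) (twist_T R x)
     = twist_T R (tmap (tmap alphaA alphaB) (tmap alphaA alphaB) x)"
proof (rule lin_map_fvs_eqI)
  fix k assume "k \<in> (I \<times> J) \<times> (I \<times> J)"
  then obtain i j i' j' where k: "k = ((i, j), (i', j'))" "i \<in> I" "j \<in> J" "i' \<in> I" "j' \<in> J"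
    by auto
  have "twist_T R (tmap (tmap alphaA alphaB) (tmap alphaA alphaB) (bv k))
      = twist_T R (tensor (tensor (alphaA (bv i)) (alphaB (bv j))) (tensor (alphaA (bv i')) (alphaB (bv j'))))"
    by (simp add: k)
  also have "\<dots> = sandwich (alphaA (bv i)) (R (tensor (alphaB (bv j)) (alphaA (bv i')))) (alphaB (bv j'))"
    using k by (intro twist_T_tensor[OF is_lin_imp_lin_map_on[OF is_lin_R]]) (simp_all add: basis_images_fvs)
  also have "\<dots> = sandwich (alphaA (bv i)) (tmap alphaA alphaB (R (bv (j, i')))) (alphaB (bv j'))"
    using k by (simp add: R_alpha_bv)
  also have "\<dots> = tmap (tmap alphaA alphaB) (tmap alphaA alphaB) (twist_T R (bv k))"
    by (simp add: k twist_T_bv tmap_def[of alphaA alphaB] lext_push sandwich_tensor split_beta)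
  finally show "tmap (tmap alphaA alphaB) (tmap alphaA alphaB) (twist_T R (bv k))
              = twist_T R (tmap (tmap alphaA alphaB) (tmap alphaA alphaB) (bv k))" ..
qed (simp_all add: lin_map_comp_simps)

lemma twist_T_mult_left:
  "\<forall>x\<in>fvs ((I \<times> J) \<times> ((I \<times> J) \<times> (I \<times> J))).
     twist_T R (tmap (tmap alphaA alphaB) (tensor_mult muA muB) x)
     = tmap (tmap alphaA alphaB) (tensor_mult muA muB) (T13 (twist_T R) (T12 (twist_T R) x))"
proof (rule lin_map_fvs_eqI)
  fix k assume "k \<in> (I \<times> J) \<times> ((I \<times> J) \<times> (I \<times> J))"
  then obtain i j i' j' i'' j'' where k: "k = ((i, j), ((i', j'), (i'', j'')))"
    "i \<in> I" "j \<in> J" "i' \<in> I" "j' \<in> J" "i'' \<in> I" "j'' \<in> J"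
    by auto
  have "twist_T R (tmap (tmap alphaA alphaB) (tensor_mult muA muB) (bv k))
      = twist_T R (tensor (tensor (alphaA (bv i)) (alphaB (bv j)))
                          (tensor (muA (bv (i', i''))) (muB (bv (j', j'')))))"
    by (simp add: k)
  also have "\<dots> = sandwich (alphaA (bv i)) (R (tensor (alphaB (bv j)) (muA (bv (i', i''))))) (muB (bv (j', j'')))"
    using k by (intro twist_T_tensor[OF is_lin_imp_lin_map_on[OF is_lin_R]]) (simp_all add: basis_images_fvs)
  also have "\<dots> = tmap (tmap alphaA alphaB) (tensor_mult muA muB) (T13 (twist_T R) (T12 (twist_T R) (bv k)))"
    using k by (simp add: R_mult_left_bv T12_bv twist_T_bv lext_push sandwich_tensor split_beta)
  finally show "twist_T R (tmap (tmap alphaA alphaB) (tensor_mult muA muB) (bv k))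
      = tmap (tmap alphaA alphaB) (tensor_mult muA muB) (T13 (twist_T R) (T12 (twist_T R) (bv k)))" .
qed (simp_all add: lin_map_comp_simps)

lemma twist_T_mult_right:
  "\<forall>x\<in>fvs ((I \<times> J) \<times> ((I \<times> J) \<times> (I \<times> J))).
     twist_T R (tmap (tensor_mult muA muB) (tmap alphaA alphaB) (assocl x))
     = tmap (tensor_mult muA muB) (tmap alphaA alphaB) (assocl (T13 (twist_T R) (T23 (twist_T R) x)))"
proof (rule lin_map_fvs_eqI)
  fix k assume "k \<in> (I \<times> J) \<times> ((I \<times> J) \<times> (I \<times> J))"
  then obtain i j i' j' i'' j'' where k: "k = ((i, j), ((i', j'), (i'', j'')))"
    "i \<in> I" "j \<in> J" "i' \<in> I" "j' \<in> J" "i'' \<in> I" "j'' \<in> J"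
    by auto
  have "twist_T R (tmap (tensor_mult muA muB) (tmap alphaA alphaB) (assocl (bv k)))
      = twist_T R (tensor (tensor (muA (bv (i, i'))) (muB (bv (j, j'))))
                          (tensor (alphaA (bv i'')) (alphaB (bv j''))))"
    by (simp add: k)
  also have "\<dots> = sandwich (muA (bv (i, i'))) (R (tensor (muB (bv (j, j'))) (alphaA (bv i'')))) (alphaB (bv j''))"
    using k by (intro twist_T_tensor[OF is_lin_imp_lin_map_on[OF is_lin_R]]) (simp_all add: basis_images_fvs)
  also have "\<dots> = tmap (tensor_mult muA muB) (tmap alphaA alphaB) (assocl (T13 (twist_T R) (T23 (twist_T R) (bv k))))"
    using k by (simp add: R_mult_right_bv T23_bv twist_T_bv lext_push sandwich_tensor split_beta)
  finally show "twist_T R (tmap (tensor_mult muA muB) (tmap alphaA alphaB) (assocl (bv k)))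
      = tmap (tensor_mult muA muB) (tmap alphaA alphaB) (assocl (T13 (twist_T R) (T23 (twist_T R) (bv k))))" .
qed (simp_all add: lin_map_comp_simps)

lemma hom_twistor_twist_T:
  "hom_twistor (I \<times> J) (tensor_mult muA muB) (tmap alphaA alphaB) (twist_T R)"
  unfolding hom_twistor_def
  using is_lin_twist_T twist_T_alpha twist_T_mult_left twist_T_mult_right twist_T_T12_T23_commute
  by blast

end

theorem proposition2p6:
  fixes I :: "'i set" and J :: "'j set"
    and muA :: "('i \<times> 'i \<Rightarrow>\<^sub>0 'k::field) \<Rightarrow> ('i \<Rightarrow>\<^sub>0 'k)" and alphaA :: "('i \<Rightarrow>\<^sub>0 'k) \<Rightarrow> ('i \<Rightarrow>\<^sub>0 'k)"
    and muB :: "('j \<times> 'j \<Rightarrow>\<^sub>0 'k) \<Rightarrow> ('j \<Rightarrow>\<^sub>0 'k)" and alphaB :: "('j \<Rightarrow>\<^sub>0 'k) \<Rightarrow> ('j \<Rightarrow>\<^sub>0 'k)"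
    and R :: "('j \<times> 'i \<Rightarrow>\<^sub>0 'k) \<Rightarrow> ('i \<times> 'j \<Rightarrow>\<^sub>0 'k)"
  assumes "hom_assoc I muA alphaA"
    and "hom_assoc J muB alphaB"
    and "hom_twisting I J muA alphaA muB alphaB R"
  shows "hom_twistor (I \<times> J) (tensor_mult muA muB) (tmap alphaA alphaB) (twist_T R)
    \<and> hom_assoc (I \<times> J) (tensor_mult muA muB \<circ> twist_T R) (tmap alphaA alphaB)"
proof -
  interpret hom_twisted_tensor I J muA alphaA muB alphaB R
    using assms by unfold_locales
  have twistor: "hom_twistor (I \<times> J) (tensor_mult muA muB) (tmap alphaA alphaB) (twist_T R)"
    by (rule hom_twistor_twist_T)
  show ?thesis
    using twistor hom_assoc_twisted[OF hom_assoc_tensor_mult[OF assms(1,2)] twistor] by blast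
qed

end
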